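(* Let $(X,d)$ be a $\delta$-Gromov hyperbolic space, $p\in X$, $\epsilon>0$, and $X^\epsilon=(X,d_\epsilon)$ the uniformized space. Let $x\in\partial_{d_\epsilon}X^\epsilon$. Then every sequence $(x_n)\subseteq X$ converging to $x$ with respect to $d_\epsilon$ has a subsequence $(x_{n_k})_k$ which is a Gromov sequence.
   Context: Gromov product $(x|y)_p=\frac12(d(p,x)+d(p,y)-d(x,y))$. $\delta$-Gromov hyperbolic: unbounded, proper, geodesic, and $(x|z)_p\ge\min\{(x|y)_p,(y|z)_p\}-\delta$ for all $x,y,z,p$. Uniformized metric: $d_\epsilon(x,y)=\inf_\gamma\int_\gamma e^{-\epsilon d(p,z)}ds(z)$ over $d$-rectifiable curves from $x$ to $y$; $\partial_{d_\epsilon}X^\epsilon=\overline{X^\epsilon}\setminus X^\epsilon$ (closure in the completion). A Gromov sequence is $(x_n)$ with $(x_n|x_m)_p\to\infty$ as $n,m\to\infty$. *)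

theory Defs
  imports "HOL-Analysis.Analysis"
begin

text \<open>The space X is the whole of a type 'a of class metric_space, with d = dist.\<close>

definition gromov_product :: "'a::metric_space \<Rightarrow> 'a \<Rightarrow> 'a \<Rightarrow> real" where
  "gromov_product p x y = (dist p x + dist p y - dist x y) / 2"

definition proper_space :: "'a::metric_space itself \<Rightarrow> bool" where
  "proper_space _ \<longleftrightarrow> (\<forall>S::'a set. bounded S \<and> closed S \<longrightarrow> compact S)"

definition geodesic_space :: "'a::metric_space itself \<Rightarrow> bool" where
  "geodesic_space _ \<longleftrightarrow> (\<forall>x y::'a. \<exists>\<gamma>::real \<Rightarrow> 'a. \<gamma> 0 = x \<and> \<gamma> (dist x y) = y \<and>
      (\<forall>s\<in>{0..dist x y}. \<forall>t\<in>{0..dist x y}. dist (\<gamma> s) (\<gamma> t) = \<bar>s - t\<bar>))"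

definition gromov_hyperbolic :: "real \<Rightarrow> 'a::metric_space itself \<Rightarrow> bool" where
  "gromov_hyperbolic \<delta> T \<longleftrightarrow>
     \<not> bounded (UNIV :: 'a set) \<and> proper_space T \<and> geodesic_space T \<and>
     (\<forall>x y z p :: 'a. gromov_product p x z \<ge>
         min (gromov_product p x y) (gromov_product p y z) - \<delta>)"

definition partition_sums :: "(real \<Rightarrow> 'a::metric_space) \<Rightarrow> real \<Rightarrow> real \<Rightarrow> real set" where
  "partition_sums \<gamma> a b = {(\<Sum>i<n. dist (\<gamma> (t i)) (\<gamma> (t (Suc i)))) | t n.
       t 0 = a \<and> t n = b \<and> (\<forall>i<n. t i \<le> t (Suc i))}"

definition curve_length :: "(real \<Rightarrow> 'a::metric_space) \<Rightarrow> real \<Rightarrow> real \<Rightarrow> real" where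
  "curve_length \<gamma> a b = Sup (partition_sums \<gamma> a b)"

definition rectifiable_curve :: "(real \<Rightarrow> 'a::metric_space) \<Rightarrow> real \<Rightarrow> real \<Rightarrow> bool" where
  "rectifiable_curve \<gamma> a b \<longleftrightarrow> a \<le> b \<and> continuous_on {a..b} \<gamma> \<and> bdd_above (partition_sums \<gamma> a b)"

text \<open>Arc-length reparametrisation: s \<in> [0, length] is mapped to \<gamma>(t) where the length of
  \<gamma> on [a,t] equals s (well defined since \<gamma> is constant where the length is constant).\<close>
definition arclength_param :: "(real \<Rightarrow> 'a::metric_space) \<Rightarrow> real \<Rightarrow> real \<Rightarrow> real \<Rightarrow> 'a" where
  "arclength_param \<gamma> a b s = \<gamma> (SOME t. t \<in> {a..b} \<and> curve_length \<gamma> a t = s)"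

definition line_integral :: "('a::metric_space \<Rightarrow> real) \<Rightarrow> (real \<Rightarrow> 'a) \<Rightarrow> real \<Rightarrow> real \<Rightarrow> real" where
  "line_integral \<rho> \<gamma> a b = integral {0..curve_length \<gamma> a b} (\<lambda>s. \<rho> (arclength_param \<gamma> a b s))"

definition uniformized_dist :: "real \<Rightarrow> 'a::metric_space \<Rightarrow> 'a \<Rightarrow> 'a \<Rightarrow> real" where
  "uniformized_dist \<epsilon> p x y = Inf {line_integral (\<lambda>z. exp (- \<epsilon> * dist p z)) \<gamma> a b | \<gamma> a b.
      rectifiable_curve \<gamma> a b \<and> \<gamma> a = x \<and> \<gamma> b = y}"

definition gromov_sequence :: "'a::metric_space \<Rightarrow> (nat \<Rightarrow> 'a) \<Rightarrow> bool" where
  "gromov_sequence p xs \<longleftrightarrow>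
     (\<forall>M. \<exists>N. \<forall>n m. n \<ge> N \<and> m \<ge> N \<longrightarrow> gromov_product p (xs n) (xs m) \<ge> M)"

end

(* Since d_eps <= d in a geodesic space, the map from (X, d) into the completion of X^eps is
   1-Lipschitz. A sequence converging to a boundary point therefore has no bounded subsequence:
   by properness it would have a d-convergent subsequence, whose image would converge inside the
   image of X. So d(p, x_n) tends to infinity. On geodesics from p to the x_n, the points at
   distance k from p lie in the compact ball of radius k; a diagonal subsequence makes them
   Cauchy for every k, and two geodesics whose points at distance k are 1-close give a Gromov
   product of at least k - 1/2. *)

theory Submission
  imports Defs "HOL-Library.Diagonal_Subsequence"
begin

definition geodesic_segment :: "'a::metric_space \<Rightarrow> 'a \<Rightarrow> (real \<Rightarrow> 'a) \<Rightarrow> bool" where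
  "geodesic_segment x y \<gamma> \<longleftrightarrow> \<gamma> 0 = x \<and> \<gamma> (dist x y) = y \<and>
     (\<forall>s\<in>{0..dist x y}. \<forall>t\<in>{0..dist x y}. dist (\<gamma> s) (\<gamma> t) = \<bar>s - t\<bar>)"

lemma geodesic_space_iff_segments:
  "geodesic_space TYPE('a::metric_space) \<longleftrightarrow> (\<forall>x y::'a. \<exists>\<gamma>. geodesic_segment x y \<gamma>)"
  by (simp add: geodesic_space_def geodesic_segment_def)

lemma geodesic_segment_dist:
  assumes "geodesic_segment x y \<gamma>" "s \<in> {0..dist x y}" "t \<in> {0..dist x y}"
  shows "dist (\<gamma> s) (\<gamma> t) = \<bar>s - t\<bar>"
  using assms by (simp add: geodesic_segment_def)

lemma geodesic_segment_lipschitz: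
  assumes "geodesic_segment x y \<gamma>"
  shows "1-lipschitz_on {0..dist x y} \<gamma>"
  using geodesic_segment_dist[OF assms] by (intro lipschitz_onI) (auto simp: dist_real_def)

lemma dist_geodesic_segment_start:
  assumes "geodesic_segment x y \<gamma>" "s \<in> {0..dist x y}"
  shows "dist x (\<gamma> s) = s"
  using geodesic_segment_dist[OF assms(1), of 0 s] assms by (simp add: geodesic_segment_def)

lemma dist_geodesic_segment_end:
  assumes "geodesic_segment x y \<gamma>" "s \<in> {0..dist x y}"
  shows "dist (\<gamma> s) y = dist x y - s"
  using geodesic_segment_dist[OF assms(1), of s "dist x y"] assms by (simp add: geodesic_segment_def)

lemma partition_sum_le_lipschitz:
  assumes "L-lipschitz_on {a..b} \<gamma>" "S \<in> partition_sums \<gamma> a b"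
  shows "S \<le> L * (b - a)"
proof -
  obtain t n where S: "S = (\<Sum>i<n. dist (\<gamma> (t i)) (\<gamma> (t (Suc i))))"
    and t0: "t 0 = a" and tn: "t n = b" and steps: "\<forall>i<n. t i \<le> t (Suc i)"
    using assms(2) unfolding partition_sums_def by blast
  have t_in: "t i \<in> {a..b}" if "i \<le> n" for i
  proof -
    have "mono (\<lambda>i. t (min i n))"
      using steps by (intro mono_iff_le_Suc[THEN iffD2]) (simp add: min_def not_less_eq_eq)
    then show ?thesis
      using monoD[of "\<lambda>i. t (min i n)" 0 i] monoD[of "\<lambda>i. t (min i n)" i n] that t0 tn by auto
  qed
  have "S \<le> (\<Sum>i<n. L * (t (Suc i) - t i))"
    unfolding S using steps t_in
    by (intro sum_mono) (auto simp: dist_real_def intro!: lipschitz_onD[OF assms(1), THEN order_trans])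
  also have "\<dots> = L * (b - a)"
    by (simp add: sum_distrib_left[symmetric] sum_lessThan_telescope t0 tn)
  finally show ?thesis .
qed

lemma dist_endpoints_in_partition_sums:
  assumes "a \<le> b"
  shows "dist (\<gamma> a) (\<gamma> b) \<in> partition_sums \<gamma> a b"
  unfolding partition_sums_def using assms
  by (intro CollectI exI[of _ "\<lambda>i. if i = 0 then a else b"] exI[of _ 1]) simp

lemma rectifiable_curve_lipschitz:
  assumes "a \<le> b" "L-lipschitz_on {a..b} \<gamma>"
  shows "rectifiable_curve \<gamma> a b"
  unfolding rectifiable_curve_def
  using assms partition_sum_le_lipschitz[OF assms(2)] lipschitz_on_continuous_on[OF assms(2)]
  by (auto intro: bdd_aboveI[where M="L * (b - a)"])

lemma curve_length_le_lipschitz: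
  assumes "a \<le> b" "L-lipschitz_on {a..b} \<gamma>"
  shows "curve_length \<gamma> a b \<le> L * (b - a)"
  unfolding curve_length_def
  using dist_endpoints_in_partition_sums[OF assms(1)] partition_sum_le_lipschitz[OF assms(2)]
  by (intro cSup_least) auto

lemma dist_endpoints_le_curve_length:
  assumes "rectifiable_curve \<gamma> a b"
  shows "dist (\<gamma> a) (\<gamma> b) \<le> curve_length \<gamma> a b"
  using assms dist_endpoints_in_partition_sums unfolding curve_length_def rectifiable_curve_def
  by (intro cSup_upper) auto

lemma line_integral_nonneg:
  assumes "\<And>z. 0 \<le> \<rho> z"
  shows "0 \<le> line_integral \<rho> \<gamma> a b"
  unfolding line_integral_def
  by (cases "(\<lambda>s. \<rho> (arclength_param \<gamma> a b s)) integrable_on {0..curve_length \<gamma> a b}")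
     (auto intro: integral_nonneg assms simp: not_integrable_integral)

lemma line_integral_le_curve_length:
  assumes "\<And>z. \<rho> z \<le> 1" "0 \<le> curve_length \<gamma> a b"
  shows "line_integral \<rho> \<gamma> a b \<le> curve_length \<gamma> a b"
proof (cases "(\<lambda>s. \<rho> (arclength_param \<gamma> a b s)) integrable_on {0..curve_length \<gamma> a b}")
  case True
  then have "integral {0..curve_length \<gamma> a b} (\<lambda>s. \<rho> (arclength_param \<gamma> a b s))
        \<le> integral {0..curve_length \<gamma> a b} (\<lambda>s. 1)"
    using assms(1) by (intro integral_le) auto
  then show ?thesis using assms(2) unfolding line_integral_def by simp
next
  case False
  then show ?thesis using assms(2) unfolding line_integral_def by (simp add: not_integrable_integral)
qed

lemma uniformized_dist_le_dist:
  fixes p x y :: "'a::metric_space"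
  assumes "geodesic_space TYPE('a)" "0 \<le> \<epsilon>"
  shows "uniformized_dist \<epsilon> p x y \<le> dist x y"
proof -
  let ?\<rho> = "\<lambda>z. exp (- \<epsilon> * dist p z)"
  obtain \<gamma> where \<gamma>: "geodesic_segment x y \<gamma>"
    using assms(1) unfolding geodesic_space_iff_segments by blast
  have rect: "rectifiable_curve \<gamma> 0 (dist x y)"
    using rectifiable_curve_lipschitz geodesic_segment_lipschitz[OF \<gamma>] zero_le_dist by blast
  have "uniformized_dist \<epsilon> p x y \<le> line_integral ?\<rho> \<gamma> 0 (dist x y)"
    unfolding uniformized_dist_def
  proof (rule cInf_lower)
    show "line_integral ?\<rho> \<gamma> 0 (dist x y) \<in> {line_integral ?\<rho> \<gamma> a b | \<gamma> a b.
        rectifiable_curve \<gamma> a b \<and> \<gamma> a = x \<and> \<gamma> b = y}"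
      using rect \<gamma> unfolding geodesic_segment_def by blast
    show "bdd_below {line_integral ?\<rho> \<gamma> a b | \<gamma> a b. rectifiable_curve \<gamma> a b \<and> \<gamma> a = x \<and> \<gamma> b = y}"
      by (rule bdd_belowI[of _ 0]) (auto intro: line_integral_nonneg)
  qed
  also have "\<dots> \<le> curve_length \<gamma> 0 (dist x y)"
    using assms(2) order_trans[OF zero_le_dist dist_endpoints_le_curve_length[OF rect]]
    by (intro line_integral_le_curve_length) simp_all
  also have "\<dots> \<le> dist x y"
    using curve_length_le_lipschitz[OF zero_le_dist geodesic_segment_lipschitz[OF \<gamma>]] by simp
  finally show ?thesis .
qed

lemma compact_cball_if_proper:
  fixes p :: "'a::metric_space"
  assumes "proper_space TYPE('a)"
  shows "compact (cball p r)"
  using assms unfolding proper_space_def by simp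

lemma dist_tendsto_at_top_if_image_tends_outside_range:
  fixes \<iota> :: "'a::metric_space \<Rightarrow> 'b::metric_space" and xs :: "nat \<Rightarrow> 'a"
  assumes "proper_space TYPE('a)" "continuous_on UNIV \<iota>"
    and "(\<lambda>n. \<iota> (xs n)) \<longlonglongrightarrow> \<xi>" "\<xi> \<notin> range \<iota>"
  shows "filterlim (\<lambda>n. dist p (xs n)) at_top sequentially"
proof (rule ccontr)
  assume "\<not> ?thesis"
  then obtain B where "frequently (\<lambda>n. \<not> B \<le> dist p (xs n)) sequentially"
    unfolding filterlim_at_top not_all not_eventually by blast
  then have "infinite {n. \<not> B \<le> dist p (xs n)}"
    by (simp add: cofinite_eq_sequentially[symmetric] frequently_cofinite)
  then have "infinite {n. xs n \<in> cball p B}"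
    by (rule infinite_super[rotated]) auto
  then obtain r :: "nat \<Rightarrow> nat" where "strict_mono r" "\<forall>n. r n \<in> {n. xs n \<in> cball p B}"
    using infinite_enumerate by blast
  then have r: "strict_mono r" "\<forall>n. (xs \<circ> r) n \<in> cball p B"
    by simp_all
  obtain l r' where "strict_mono r'" and l: "(xs \<circ> r \<circ> r') \<longlonglongrightarrow> l"
    using seq_compactE[OF compact_imp_seq_compact[OF compact_cball_if_proper[OF assms(1)]] r(2)] .
  have "(\<lambda>n. \<iota> ((xs \<circ> r \<circ> r') n)) \<longlonglongrightarrow> \<iota> l"
    using continuous_on_tendsto_compose[OF assms(2) l] by simp
  moreover have "(\<lambda>n. \<iota> ((xs \<circ> r \<circ> r') n)) \<longlonglongrightarrow> \<xi>"
    using LIMSEQ_subseq_LIMSEQ[OF assms(3) strict_mono_o[OF r(1) \<open>strict_mono r'\<close>]] by (simp add: o_def)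
  ultimately have "\<iota> l = \<xi>"
    by (rule LIMSEQ_unique)
  with assms(4) show False
    by blast
qed

lemma gromov_product_ge_geodesic_points:
  assumes \<gamma>: "geodesic_segment p a \<gamma>" and \<eta>: "geodesic_segment p b \<eta>"
    and "0 \<le> k" "k \<le> dist p a" "k \<le> dist p b"
  shows "k - dist (\<gamma> k) (\<eta> k) / 2 \<le> gromov_product p a b"
proof -
  have "dist a b \<le> dist a (\<gamma> k) + dist (\<gamma> k) (\<eta> k) + dist (\<eta> k) b"
    using dist_triangle[of a b "\<gamma> k"] dist_triangle[of "\<gamma> k" b "\<eta> k"] by linarith
  also have "\<dots> = (dist p a - k) + dist (\<gamma> k) (\<eta> k) + (dist p b - k)"
    using dist_geodesic_segment_end[OF \<gamma>, of k] dist_geodesic_segment_end[OF \<eta>, of k] assms(3-5)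
    by (simp add: dist_commute)
  finally show ?thesis
    unfolding gromov_product_def by simp
qed

lemma diagonal_convergent_subsequence:
  fixes f :: "nat \<Rightarrow> nat \<Rightarrow> 'a::topological_space"
  assumes "\<And>k. seq_compact (K k)" "\<And>k n. f k n \<in> K k"
  shows "\<exists>r. strict_mono r \<and> (\<forall>k. convergent (\<lambda>n. f k (r n)))"
proof -
  interpret subseqs "\<lambda>k s. convergent (\<lambda>n. f k (s n))"
  proof
    fix k and s :: "nat \<Rightarrow> nat"
    have "\<forall>n. f k (s n) \<in> K k"
      using assms(2) by blast
    then obtain l r where "strict_mono r" "((\<lambda>n. f k (s n)) \<circ> r) \<longlonglongrightarrow> l"
      by (meson seq_compactE[OF assms(1)])
    then show "\<exists>r. strict_mono r \<and> convergent (\<lambda>n. f k ((s \<circ> r) n))"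
      by (auto simp: convergent_def o_def)
  qed
  have "convergent (\<lambda>n. f k (diagseq n))" for k
  proof -
    have "convergent (\<lambda>n. f k ((s \<circ> r) n))"
      if "strict_mono r" "convergent (\<lambda>n. f k (s n))" for r s k
      using that LIMSEQ_subseq_LIMSEQ[of "\<lambda>n. f k (s n)" _ r] by (auto simp: convergent_def o_def)
    then have "convergent (\<lambda>n. f k ((diagseq \<circ> (+) (Suc k)) n))"
      by (rule diagseq_holds)
    then obtain L where "(\<lambda>n. f k (diagseq (n + Suc k))) \<longlonglongrightarrow> L"
      unfolding convergent_def o_def by (auto simp: add.commute)
    then have "(\<lambda>n. f k (diagseq n)) \<longlonglongrightarrow> L"
      by (rule LIMSEQ_offset)
    then show ?thesis
      by (auto simp: convergent_def)
  qed
  with subseq_diagseq show ?thesis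
    by blast
qed

lemma gromov_sequence_if_geodesic_points_Cauchy:
  fixes xs :: "nat \<Rightarrow> 'a::metric_space"
  assumes \<Gamma>: "\<And>n. geodesic_segment p (xs n) (\<Gamma> n)"
    and escape: "filterlim (\<lambda>n. dist p (xs n)) at_top sequentially"
    and Cauchy: "\<And>k::nat. Cauchy (\<lambda>n. \<Gamma> n (min k (dist p (xs n))))"
  shows "gromov_sequence p xs"
  unfolding gromov_sequence_def
proof
  fix M :: real
  define k where "k = nat \<lceil>M\<rceil> + 1"
  obtain N1 where N1: "\<And>m n. m \<ge> N1 \<Longrightarrow> n \<ge> N1 \<Longrightarrow>
      dist (\<Gamma> m (min k (dist p (xs m)))) (\<Gamma> n (min k (dist p (xs n)))) < 1"
    using Cauchy[of k] unfolding Cauchy_def by (meson zero_less_one)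
  obtain N2 where N2: "\<And>n. n \<ge> N2 \<Longrightarrow> k \<le> dist p (xs n)"
    using escape unfolding filterlim_at_top eventually_sequentially by blast
  have "M \<le> gromov_product p (xs m) (xs n)" if "m \<ge> max N1 N2" "n \<ge> max N1 N2" for m n
  proof -
    have "k - dist (\<Gamma> m k) (\<Gamma> n k) / 2 \<le> gromov_product p (xs m) (xs n)"
      using that N2 by (intro gromov_product_ge_geodesic_points \<Gamma>) auto
    moreover have "dist (\<Gamma> m k) (\<Gamma> n k) < 1"
      using that N1[of m n] N2[of m] N2[of n] by (simp add: min_absorb1)
    ultimately show ?thesis
      unfolding k_def by linarith
  qed
  then show "\<exists>N. \<forall>m n. m \<ge> N \<and> n \<ge> N \<longrightarrow> M \<le> gromov_product p (xs m) (xs n)"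
    by blast
qed

lemma gromov_subsequence_if_escaping:
  fixes xs :: "nat \<Rightarrow> 'a::metric_space"
  assumes "proper_space TYPE('a)" "geodesic_space TYPE('a)"
    and escape: "filterlim (\<lambda>n. dist p (xs n)) at_top sequentially"
  shows "\<exists>r. strict_mono r \<and> gromov_sequence p (xs \<circ> r)"
proof -
  obtain \<Gamma> where \<Gamma>: "\<And>y. geodesic_segment p y (\<Gamma> y)"
    using assms(2) unfolding geodesic_space_iff_segments by metis
  have "\<Gamma> (xs n) (min k (dist p (xs n))) \<in> cball p k" for n and k :: nat
    using dist_geodesic_segment_start[OF \<Gamma>, of "min k (dist p (xs n))" "xs n"] by simp
  then obtain r where r: "strict_mono r"
    and Cauchy: "\<And>k::nat. Cauchy (\<lambda>n. \<Gamma> (xs (r n)) (min k (dist p (xs (r n)))))"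
    using diagonal_convergent_subsequence[of "\<lambda>k. cball p k"
        "\<lambda>k n. \<Gamma> (xs n) (min k (dist p (xs n)))"]
      compact_imp_seq_compact[OF compact_cball_if_proper[OF assms(1)]] convergent_Cauchy
    by blast
  have "filterlim (\<lambda>n. dist p ((xs \<circ> r) n)) at_top sequentially"
    using filterlim_compose[OF escape filterlim_subseq[OF r]] by (simp add: o_def)
  then have "gromov_sequence p (xs \<circ> r)"
    using \<Gamma> Cauchy by (intro gromov_sequence_if_geodesic_points_Cauchy[where \<Gamma>="\<lambda>n. \<Gamma> (xs (r n))"]) auto
  with r show ?thesis
    by blast
qed

theorem lemma3p4:
  fixes \<delta> \<epsilon> :: real and p :: "'a::metric_space"
    and \<iota> :: "'a \<Rightarrow> 'b::complete_space" and \<xi> :: 'b and xs :: "nat \<Rightarrow> 'a"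
  assumes hyp: "gromov_hyperbolic \<delta> TYPE('a)"
    and eps: "\<epsilon> > 0"
    and iso: "\<And>u v. dist (\<iota> u) (\<iota> v) = uniformized_dist \<epsilon> p u v"
    and dense: "closure (range \<iota>) = UNIV"
    and bdry: "\<xi> \<in> closure (range \<iota>) - range \<iota>"
    and conv: "(\<lambda>n. \<iota> (xs n)) \<longlonglongrightarrow> \<xi>"
  shows "\<exists>r. strict_mono r \<and> gromov_sequence p (xs \<circ> r)"
proof -
  have proper: "proper_space TYPE('a)" and geodesic: "geodesic_space TYPE('a)"
    using hyp unfolding gromov_hyperbolic_def by blast+
  have "1-lipschitz_on UNIV \<iota>"
    using iso uniformized_dist_le_dist[OF geodesic] eps by (intro lipschitz_onI) auto
  then have "filterlim (\<lambda>n. dist p (xs n)) at_top sequentially"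
    using proper conv bdry
    by (intro dist_tendsto_at_top_if_image_tends_outside_range[of \<iota>] lipschitz_on_continuous_on) auto
  then show ?thesis
    using gromov_subsequence_if_escaping[OF proper geodesic] by blast
qed

end
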